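(* Let $G$ be a graph and let $(G',L,\alpha,\beta)$ be constructed from $G$ as described in the context. If there exists an $L$-recoloring sequence for $G'$ from $\alpha$ to $\beta$ (of any length), then $G$ is 3-colorable.
   Context: A color list assignment $L$ gives each vertex a list $L(v)\subseteq[4]=\{1,2,3,4\}$. An $L$-coloring is a proper coloring $\gamma$ with $\gamma(v)\in L(v)$ for all $v$. $\mathcal{C}(G,L)$ is the graph on $L$-colorings, two adjacent iff they differ on exactly one vertex; an $L$-recoloring sequence of length $m$ is a sequence $\gamma_0,\ldots,\gamma_m$ of $L$-colorings with consecutive ones equal or adjacent in $\mathcal{C}(G,L)$. $(a,b)$-forbidding path: for $a,b\in[4]$, a path $P$ with lists $L(x)\subseteq[4]$ and end vertices $u,v$ is $(a,b)$-forbidding from $u$ to $v$ if (i) for all $x\in L(u)$, $y\in L(v)$, there is an $L$-coloring $\gamma$ of $P$ with $\gamma(u)=x,\gamma(v)=y$ iff $x\ne a$ or $y\ne b$ (such $(x,y)$ are called admissible); and (ii) for any $L$-coloring $\gamma$ of $P$ and any admissible $(x,y)$ with $x=\gamma(u)$ or $y=\gamma(v)$, there is an $L$-recoloring sequence of $P$ from $\gamma$ to an $L$-coloring $\delta$ with $\delta(u)=x,\delta(v)=y$ in which each internal vertex is recolored at most once and $u,v$ are not recolored until the last step. Such paths of length six exist whenever $L(u),L(v)\ne[4]$, $a\in L(u)$, $b\in L(v)$. Construction of $G'$: start with $V(G)$ (no edges among these), each $u\in V(G)$ with $L(u)=\{1,2,3\}$, $\alpha(u)=1$. For every edge $uv\in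 E(G)$ (with a fixed orientation $u,v$), add new vertices $x_{uv},y_{uv},z_{uv}$ with $\alpha$-value $4$ each and $L(x_{uv})=\{1,2,4\}$, $L(y_{uv})=\{3,4\}$, $L(z_{uv})=\{1,2,4\}$; add edges $ux_{uv}$, $uy_{uv}$; and add (each with its own new internal vertices, each of length six) a $(1,2)$-forbidding and a $(3,1)$-forbidding path from $u$ to $x_{uv}$, a $(2,3)$-forbidding path from $u$ to $y_{uv}$, a $(2,1)$-forbidding and a $(3,2)$-forbidding path from $v$ to $x_{uv}$, a $(1,3)$-forbidding path from $v$ to $y_{uv}$, a $(4,1)$-forbidding path from $x_{uv}$ to $z_{uv}$, and a $(4,2)$-forbidding path from $y_{uv}$ to $z_{uv}$. Let $Z=\{z_{uv}\mid uv\in E(G)\}$. Add vertices $a,b,c,d$ with $\alpha(a)=1,\alpha(b)=2,\alpha(c)=3,\alpha(d)=4$, $L(a)=\{1,2,3\}$, $L(b)=\{1,2\}$, $L(c)=\{3,4\}$, $L(d)=\{4\}$, all edges among $a,b,c,d$ except $cd$, and edges from every vertex of $Z$ to $c$. Extend $\alpha$ arbitrarily to an $L$-coloring of all internal vertices of the forbidding paths (possible since the end colors are admissible). Set $\beta(w)=\alpha(w)$ for all $w\ne a,b$, $\beta(a)=2$, $\beta(b)=1$. *)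

theory Defs
  imports Main
begin

text \<open>A path with vertices at positions 0..n (consecutive positions adjacent), with
  list assignment Ls.  Position 0 is the end vertex u, position n the end vertex v.\<close>

definition path_col :: "nat \<Rightarrow> (nat \<Rightarrow> nat set) \<Rightarrow> (nat \<Rightarrow> nat) \<Rightarrow> bool" where
  "path_col n Ls g \<longleftrightarrow> (\<forall>i\<le>n. g i \<in> Ls i) \<and> (\<forall>i<n. g i \<noteq> g (Suc i))"

definition path_recol_seq :: "nat \<Rightarrow> (nat \<Rightarrow> nat set) \<Rightarrow> (nat \<Rightarrow> nat) list \<Rightarrow> bool" where
  "path_recol_seq n Ls cs \<longleftrightarrow> cs \<noteq> [] \<and> (\<forall>c\<in>set cs. path_col n Ls c) \<and>
     (\<forall>j. Suc j < length cs \<longrightarrow> card {i. i \<le> n \<and> (cs!j) i \<noteq> (cs!Suc j) i} \<le> 1)"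

definition forbidding :: "nat \<Rightarrow> (nat \<Rightarrow> nat set) \<Rightarrow> nat \<Rightarrow> nat \<Rightarrow> bool" where
  "forbidding n Ls a b \<longleftrightarrow>
     (\<forall>i\<le>n. Ls i \<subseteq> {1,2,3,4}) \<and>
     (\<forall>x\<in>Ls 0. \<forall>y\<in>Ls n.
        (\<exists>g. path_col n Ls g \<and> g 0 = x \<and> g n = y) \<longleftrightarrow> (x \<noteq> a \<or> y \<noteq> b)) \<and>
     (\<forall>g x y. path_col n Ls g \<and> x \<in> Ls 0 \<and> y \<in> Ls n \<and> (x \<noteq> a \<or> y \<noteq> b) \<and>
        (x = g 0 \<or> y = g n) \<longrightarrow>
        (\<exists>cs. path_recol_seq n Ls cs \<and> (\<forall>i\<le>n. hd cs i = g i) \<and>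
              last cs 0 = x \<and> last cs n = y \<and>
              (\<forall>i. 0 < i \<and> i < n \<longrightarrow>
                  card {j. Suc j < length cs \<and> (cs!j) i \<noteq> (cs!Suc j) i} \<le> 1) \<and>
              (\<forall>j. j < length cs - 1 \<longrightarrow> (cs!j) 0 = g 0 \<and> (cs!j) n = g n)))"

text \<open>Vertices of G': original vertices, x_e, y_e, z_e for each oriented edge e,
  a, b, c, d, and internal vertex number i (1..5) of the k-th (0..7) forbidding path of e.\<close>
datatype 'a vtx = Orig 'a | Xv "'a \<times> 'a" | Yv "'a \<times> 'a" | Zv "'a \<times> 'a"
  | Av | Bv | Cv | Dv | Iv "'a \<times> 'a" nat nat

text \<open>The eight forbidding paths of an oriented edge e = (u,v):
  0: (1,2) u to x;  1: (3,1) u to x;  2: (2,3) u to y;  3: (2,1) v to x;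
  4: (3,2) v to x;  5: (1,3) v to y;  6: (4,1) x to z;  7: (4,2) y to z.\<close>
definition path_start :: "'a \<times> 'a \<Rightarrow> nat \<Rightarrow> 'a vtx" where
  "path_start e k = (if k < 3 then Orig (fst e) else if k < 6 then Orig (snd e)
                     else if k = 6 then Xv e else Yv e)"

definition path_end :: "'a \<times> 'a \<Rightarrow> nat \<Rightarrow> 'a vtx" where
  "path_end e k = (if k \<in> {0,1,3,4} then Xv e else if k \<in> {2,5} then Yv e else Zv e)"

definition forb_a :: "nat \<Rightarrow> nat" where "forb_a k = [1,3,2,2,3,1,4,4] ! k"
definition forb_b :: "nat \<Rightarrow> nat" where "forb_b k = [2,1,3,1,2,3,1,2] ! k"

definition pvert :: "'a \<times> 'a \<Rightarrow> nat \<Rightarrow> nat \<Rightarrow> 'a vtx" where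
  "pvert e k i = (if i = 0 then path_start e k else if i = 6 then path_end e k else Iv e k i)"

definition Gvert :: "'a set \<Rightarrow> ('a \<times> 'a) set \<Rightarrow> 'a vtx set" where
  "Gvert V Ori = Orig ` V \<union> Xv ` Ori \<union> Yv ` Ori \<union> Zv ` Ori \<union>
     {Iv e k i | e k i. e \<in> Ori \<and> k < 8 \<and> 1 \<le> i \<and> i \<le> 5} \<union> {Av, Bv, Cv, Dv}"

definition Glist :: "('a \<times> 'a \<Rightarrow> nat \<Rightarrow> nat \<Rightarrow> nat set) \<Rightarrow> 'a vtx \<Rightarrow> nat set" where
  "Glist Lint w = (case w of Orig _ \<Rightarrow> {1,2,3} | Xv _ \<Rightarrow> {1,2,4} | Yv _ \<Rightarrow> {3,4}
     | Zv _ \<Rightarrow> {1,2,4} | Av \<Rightarrow> {1,2,3} | Bv \<Rightarrow> {1,2} | Cv \<Rightarrow> {3,4} | Dv \<Rightarrow> {4}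
     | Iv e k i \<Rightarrow> Lint e k i)"

definition Gadj0 :: "('a \<times> 'a) set \<Rightarrow> 'a vtx \<Rightarrow> 'a vtx \<Rightarrow> bool" where
  "Gadj0 Ori w w' \<longleftrightarrow>
     (\<exists>e\<in>Ori. w = Orig (fst e) \<and> (w' = Xv e \<or> w' = Yv e)) \<or>
     (\<exists>e\<in>Ori. \<exists>k<8. \<exists>i<6. w = pvert e k i \<and> w' = pvert e k (Suc i)) \<or>
     (\<exists>e\<in>Ori. w = Zv e \<and> w' = Cv) \<or>
     (w, w') \<in> {(Av, Bv), (Av, Cv), (Av, Dv), (Bv, Cv), (Bv, Dv)}"

definition Gadj :: "('a \<times> 'a) set \<Rightarrow> 'a vtx \<Rightarrow> 'a vtx \<Rightarrow> bool" where
  "Gadj Ori w w' \<longleftrightarrow> Gadj0 Ori w w' \<or> Gadj0 Ori w' w"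

definition Lcoloring :: "'v set \<Rightarrow> ('v \<Rightarrow> 'v \<Rightarrow> bool) \<Rightarrow> ('v \<Rightarrow> nat set) \<Rightarrow> ('v \<Rightarrow> nat) \<Rightarrow> bool" where
  "Lcoloring W adj L g \<longleftrightarrow> (\<forall>w\<in>W. g w \<in> L w) \<and>
     (\<forall>w\<in>W. \<forall>w'\<in>W. adj w w' \<longrightarrow> g w \<noteq> g w')"

definition Lrecoloring_seq :: "'v set \<Rightarrow> ('v \<Rightarrow> 'v \<Rightarrow> bool) \<Rightarrow> ('v \<Rightarrow> nat set) \<Rightarrow>
    ('v \<Rightarrow> nat) \<Rightarrow> ('v \<Rightarrow> nat) \<Rightarrow> ('v \<Rightarrow> nat) list \<Rightarrow> bool" where
  "Lrecoloring_seq W adj L g h cs \<longleftrightarrow> cs \<noteq> [] \<and>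
     (\<forall>c\<in>set cs. Lcoloring W adj L c) \<and>
     (\<forall>w\<in>W. hd cs w = g w) \<and> (\<forall>w\<in>W. last cs w = h w) \<and>
     (\<forall>j. Suc j < length cs \<longrightarrow> card {w\<in>W. (cs!j) w \<noteq> (cs!Suc j) w} \<le> 1)"

definition three_colorable :: "'a set \<Rightarrow> ('a \<Rightarrow> 'a \<Rightarrow> bool) \<Rightarrow> bool" where
  "three_colorable V E \<longleftrightarrow> (\<exists>c. (\<forall>v\<in>V. c v \<in> {1::nat,2,3}) \<and>
     (\<forall>u\<in>V. \<forall>v\<in>V. E u v \<longrightarrow> c u \<noteq> c v))"

end

theory Submission
  imports Defs
begin

text \<open>
  Along an L-recoloring sequence from \<alpha> to \<beta>, the adjacent vertices a and b
  must exchange the colours 1 and 2.  Since b only has the colours 1 and 2 available, a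
  cannot move directly from 1 to 2 (b would have to change in the same step), so some
  colouring \<gamma> of the sequence gives a the colour 3, and then c (adjacent to a, list {3,4})
  gets colour 4.  In \<gamma> every vertex z_uv, being adjacent to c, has colour 1 or 2.  The
  restriction of \<gamma> to each forbidding path is a colouring of that path, so it avoids the
  forbidden pair of end colours; a finite case analysis on the edge gadget then shows
  \<gamma>(u) \<noteq> \<gamma>(v) for every edge uv.  Hence \<gamma> restricted to V(G) is a proper 3-colouring.
\<close>

lemma Lcoloring_in_list:
  "Lcoloring W adj L c \<Longrightarrow> w \<in> W \<Longrightarrow> c w \<in> L w"
  unfolding Lcoloring_def by blast

lemma Lcoloring_proper:
  "Lcoloring W adj L c \<Longrightarrow> w \<in> W \<Longrightarrow> w' \<in> W \<Longrightarrow> adj w w' \<Longrightarrow> c w \<noteq> c w'"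
  unfolding Lcoloring_def by blast

lemma Lrecoloring_seq_coloring:
  "Lrecoloring_seq W adj L g h cs \<Longrightarrow> c \<in> set cs \<Longrightarrow> Lcoloring W adj L c"
  unfolding Lrecoloring_seq_def by blast

lemma recoloring_step_single:
  assumes R: "Lrecoloring_seq W adj L g h cs" and fin: "finite W"
    and j: "Suc j < length cs" and in_W: "w \<in> W" "w' \<in> W" and distinct: "w \<noteq> w'"
    and changed: "(cs!j) w \<noteq> (cs!Suc j) w" "(cs!j) w' \<noteq> (cs!Suc j) w'"
  shows False
proof -
  let ?D = "{x\<in>W. (cs!j) x \<noteq> (cs!Suc j) x}"
  have "{w, w'} \<subseteq> ?D" using in_W changed by auto
  then have "card {w, w'} \<le> card ?D" using fin by (intro card_mono) auto
  moreover have "card ?D \<le> 1" using R j unfolding Lrecoloring_seq_def by blast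
  ultimately show False using distinct by simp
qed

text \<open>If a
  keeps a colour in {p,q} throughout a recoloring sequence, then a is never recoloured:
  switching a between p and q would force b to switch in the same step.\<close>
lemma frozen_pair:
  assumes R: "Lrecoloring_seq W adj L g h cs" and fin: "finite W"
    and in_W: "a \<in> W" "b \<in> W" and adj: "adj a b" and list_b: "L b \<subseteq> {p, q}"
    and stays: "\<forall>c\<in>set cs. c a \<in> {p, q}"
  shows "h a = g a"
proof -
  have proper: "(cs!j) a \<noteq> (cs!j) b" "(cs!j) b \<in> {p, q}" if "j < length cs" for j
    using Lrecoloring_seq_coloring[OF R nth_mem[OF that]] in_W adj list_b
    by (auto dest: Lcoloring_proper Lcoloring_in_list)
  have ne: "cs \<noteq> []" using R unfolding Lrecoloring_seq_def by blast
  have a_ne_b: "a \<noteq> b" using proper(1)[of 0] ne by auto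
  have const: "(cs!j) a = (cs!0) a" if "j < length cs" for j
    using that
  proof (induction j)
    case (Suc j)
    have "(cs!Suc j) a = (cs!j) a"
    proof (rule ccontr)
      assume moved: "(cs!Suc j) a \<noteq> (cs!j) a"
      have "(cs!j) a \<in> {p, q}" "(cs!Suc j) a \<in> {p, q}"
        using stays Suc.prems nth_mem Suc_lessD by blast+
      then have "(cs!j) b \<noteq> (cs!Suc j) b"
        using moved proper[of j] proper[of "Suc j"] Suc.prems by auto
      then show False
        using recoloring_step_single[OF R fin Suc.prems in_W a_ne_b] moved by argo
    qed
    then show ?case using Suc by simp
  qed simp
  have "h a = last cs a" "g a = hd cs a"
    using R in_W(1) unfolding Lrecoloring_seq_def by metis+
  moreover have "last cs a = hd cs a"
    using const[of "length cs - 1"] ne by (simp add: last_conv_nth hd_conv_nth)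
  ultimately show ?thesis by simp
qed

lemma forbidding_avoids_pair:
  assumes F: "forbidding n Ls a b" and g: "path_col n Ls g"
  shows "\<not> (g 0 = a \<and> g n = b)"
proof
  assume ends: "g 0 = a \<and> g n = b"
  have admissible: "\<forall>x\<in>Ls 0. \<forall>y\<in>Ls n.
      (\<exists>g'. path_col n Ls g' \<and> g' 0 = x \<and> g' n = y) \<longleftrightarrow> (x \<noteq> a \<or> y \<noteq> b)"
    using F unfolding forbidding_def by (rule conjunct1[OF conjunct2])
  have "g 0 \<in> Ls 0" "g n \<in> Ls n" using g unfolding path_col_def by auto
  with admissible have "\<not> (\<exists>g'. path_col n Ls g' \<and> g' 0 = g 0 \<and> g' n = g n)"
    using ends by blast
  then show False using g by blast
qed

text \<open>G' is finite when G is; needed to bound the number of recoloured vertices.\<close>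
lemma finite_Gvert:
  assumes "finite V" and "Ori \<subseteq> V \<times> V"
  shows "finite (Gvert V Ori)"
proof -
  have fin_Ori: "finite Ori" using assms finite_subset by blast
  have "{Iv e k i | e k i. e \<in> Ori \<and> k < 8 \<and> 1 \<le> i \<and> i \<le> 5}
        \<subseteq> (\<lambda>(e,k,i). Iv e k i) ` (Ori \<times> {..<(8::nat)} \<times> {1..(5::nat)})"
    by force
  then have "finite {Iv e k i | e k i. e \<in> Ori \<and> k < 8 \<and> 1 \<le> i \<and> i \<le> 5}"
    using fin_Ori finite_subset by fastforce
  then show ?thesis using assms fin_Ori unfolding Gvert_def by auto
qed

lemma Gadj_path_step:
  assumes "e \<in> Ori" and "k < 8" and "i < 6"
  shows "Gadj Ori (pvert e k i) (pvert e k (Suc i))"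
proof -
  have "Gadj0 Ori (pvert e k i) (pvert e k (Suc i))"
    unfolding Gadj0_def by (rule disjI2, rule disjI1) (use assms in blast)
  then show ?thesis unfolding Gadj_def by (rule disjI1)
qed

lemma Gadj_edge_gadget:
  assumes "(u, v) \<in> Ori"
  shows "Gadj Ori (Orig u) (Xv (u, v))" "Gadj Ori (Orig u) (Yv (u, v))" "Gadj Ori (Zv (u, v)) Cv"
  unfolding Gadj_def Gadj0_def using assms by (metis fst_conv)+

lemma pvert_in_Gvert:
  assumes e: "e \<in> Ori" and OV: "Ori \<subseteq> V \<times> V" and k: "k < 8" and i: "i \<le> 6"
  shows "pvert e k i \<in> Gvert V Ori"
proof -
  have ends: "fst e \<in> V" "snd e \<in> V" using e OV by auto
  consider "i = 0" | "i = 6" | "1 \<le> i \<and> i \<le> 5" using i by linarith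
  then show ?thesis
  proof cases
    case 1 then show ?thesis using e ends unfolding pvert_def path_start_def Gvert_def by simp
  next
    case 2 then show ?thesis using e unfolding pvert_def path_end_def Gvert_def by simp
  next
    case 3
    then have "pvert e k i \<in> {Iv e k i | e k i. e \<in> Ori \<and> k < 8 \<and> 1 \<le> i \<and> i \<le> 5}"
      using e k unfolding pvert_def by force
    then show ?thesis unfolding Gvert_def by blast
  qed
qed

lemma coloring_avoids_forbidden_pairs:
  assumes col: "Lcoloring (Gvert V Ori) (Gadj Ori) (Glist Lint) c"
    and OV: "Ori \<subseteq> V \<times> V" and e: "e \<in> Ori" and k: "k < 8"
    and F: "forbidding 6 (\<lambda>i. Glist Lint (pvert e k i)) (forb_a k) (forb_b k)"
  shows "\<not> (c (pvert e k 0) = forb_a k \<and> c (pvert e k 6) = forb_b k)"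
proof -
  have in_G: "pvert e k i \<in> Gvert V Ori" if "i \<le> 6" for i
    using pvert_in_Gvert[OF e OV k that] .
  have "path_col 6 (\<lambda>i. Glist Lint (pvert e k i)) (\<lambda>i. c (pvert e k i))"
    unfolding path_col_def
    using Lcoloring_in_list[OF col in_G] Lcoloring_proper[OF col in_G in_G Gadj_path_step[OF e k]]
    by simp
  then show ?thesis using forbidding_avoids_pair[OF F] by simp
qed

text \<open>The edge gadget, as a finite case analysis: with the lists of u, v, x, y, the colour
  of z restricted to {1,2} (z is adjacent to c, which has colour 4), the edges ux and uy,
  and the eight forbidden pairs of the forbidding paths, u and v get different colours.\<close>
lemma edge_gadget_separates:
  fixes u v x y z :: nat
  assumes lists: "u \<in> {1,2,3}" "v \<in> {1,2,3}" "x \<in> {1,2,4}" "y \<in> {3,4}" "z \<in> {1,2}"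
    and edges: "u \<noteq> x" "u \<noteq> y"
    and forbidden: "\<not> (u = 1 \<and> x = 2)" "\<not> (u = 3 \<and> x = 1)" "\<not> (u = 2 \<and> y = 3)"
      "\<not> (v = 2 \<and> x = 1)" "\<not> (v = 3 \<and> x = 2)" "\<not> (v = 1 \<and> y = 3)"
      "\<not> (x = 4 \<and> z = 1)" "\<not> (y = 4 \<and> z = 2)"
  shows "u \<noteq> v"
  using assms by auto

lemma coloring_with_c4_separates_edge:
  assumes col: "Lcoloring (Gvert V Ori) (Gadj Ori) (Glist Lint) c"
    and OV: "Ori \<subseteq> V \<times> V" and c4: "c Cv = 4"
    and forb: "\<And>k. k < 8 \<Longrightarrow>
       forbidding 6 (\<lambda>i. Glist Lint (pvert (u, v) k i)) (forb_a k) (forb_b k)"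
    and e: "(u, v) \<in> Ori"
  shows "c (Orig u) \<noteq> c (Orig v)"
proof -
  let ?e = "(u, v)"
  have in_G: "Orig u \<in> Gvert V Ori" "Orig v \<in> Gvert V Ori" "Xv ?e \<in> Gvert V Ori"
      "Yv ?e \<in> Gvert V Ori" "Zv ?e \<in> Gvert V Ori" "Cv \<in> Gvert V Ori"
    using e OV unfolding Gvert_def by auto
  have lists: "c (Orig u) \<in> {1,2,3}" "c (Orig v) \<in> {1,2,3}" "c (Xv ?e) \<in> {1,2,4}"
      "c (Yv ?e) \<in> {3,4}" "c (Zv ?e) \<in> {1,2,4}"
    using Lcoloring_in_list[OF col in_G(1)] Lcoloring_in_list[OF col in_G(2)]
      Lcoloring_in_list[OF col in_G(3)] Lcoloring_in_list[OF col in_G(4)]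
      Lcoloring_in_list[OF col in_G(5)]
    by (simp_all add: Glist_def)
  have edges: "c (Orig u) \<noteq> c (Xv ?e)" "c (Orig u) \<noteq> c (Yv ?e)" "c (Zv ?e) \<noteq> 4"
    using Lcoloring_proper[OF col] in_G Gadj_edge_gadget[OF e] c4 by metis+
  have avoid: "\<not> (c (pvert ?e k 0) = forb_a k \<and> c (pvert ?e k 6) = forb_b k)" if "k < 8" for k
    using coloring_avoids_forbidden_pairs[OF col OV e that forb[OF that]] .
  note pair = avoid[unfolded pvert_def path_start_def path_end_def forb_a_def forb_b_def]
  have forbidden: "\<not> (c (Orig u) = 1 \<and> c (Xv ?e) = 2)" "\<not> (c (Orig u) = 3 \<and> c (Xv ?e) = 1)"
      "\<not> (c (Orig u) = 2 \<and> c (Yv ?e) = 3)" "\<not> (c (Orig v) = 2 \<and> c (Xv ?e) = 1)"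
      "\<not> (c (Orig v) = 3 \<and> c (Xv ?e) = 2)" "\<not> (c (Orig v) = 1 \<and> c (Yv ?e) = 3)"
      "\<not> (c (Xv ?e) = 4 \<and> c (Zv ?e) = 1)" "\<not> (c (Yv ?e) = 4 \<and> c (Zv ?e) = 2)"
    using pair[of 0] pair[of 1] pair[of 2] pair[of 3] pair[of 4] pair[of 5] pair[of 6] pair[of 7]
    by simp_all
  have "c (Zv ?e) \<in> {1,2}" using lists(5) edges(3) by auto
  then show ?thesis
    using edge_gadget_separates[OF lists(1-4) _ edges(1,2) forbidden] by blast
qed

text \<open>In any recoloring sequence of G' from \<alpha> to \<beta>, the vertices a and b exchange the
  colours 1 and 2.  By the frozen-pair lemma a cannot stay inside {1,2}, so at some moment
  a has colour 3, and then c, adjacent to a, has colour 4.\<close>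
lemma recoloring_passes_c4:
  assumes R: "Lrecoloring_seq (Gvert V Ori) (Gadj Ori) (Glist Lint) \<alpha> (\<alpha>(Av := 2, Bv := 1)) cs"
    and finV: "finite V" and OV: "Ori \<subseteq> V \<times> V" and alpha_a: "\<alpha> Av = 1"
  obtains c where "c \<in> set cs" and "c Cv = 4"
proof -
  let ?W = "Gvert V Ori"
  have in_W: "Av \<in> ?W" "Bv \<in> ?W" "Cv \<in> ?W" unfolding Gvert_def by simp_all
  have adj: "Gadj Ori Av Bv" "Gadj Ori Av Cv" unfolding Gadj_def Gadj0_def by simp_all
  have "\<not> (\<forall>c\<in>set cs. c Av \<in> {1, 2})"
    using frozen_pair[OF R finite_Gvert[OF finV OV] in_W(1,2) adj(1), of 1 2] alpha_a
    by (auto simp: Glist_def)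
  then obtain c where c_in: "c \<in> set cs" and a_out: "c Av \<notin> {1, 2}" by blast
  have col: "Lcoloring ?W (Gadj Ori) (Glist Lint) c" using Lrecoloring_seq_coloring[OF R c_in] .
  have "c Av \<in> {1, 2, 3}" "c Cv \<in> {3, 4}" "c Av \<noteq> c Cv"
    using Lcoloring_in_list[OF col in_W(1)] Lcoloring_in_list[OF col in_W(3)]
      Lcoloring_proper[OF col in_W(1,3) adj(2)]
    by (simp_all add: Glist_def)
  with a_out have "c Cv = 4" by auto
  with c_in show ?thesis by (rule that)
qed

lemma three_colorable_from_orientation:
  fixes f :: "'a \<Rightarrow> nat"
  assumes range: "\<And>v. v \<in> V \<Longrightarrow> f v \<in> {1, 2, 3}"
    and sep: "\<And>u v. (u, v) \<in> Ori \<Longrightarrow> f u \<noteq> f v"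
    and total: "\<And>u v. E u v \<Longrightarrow> (u, v) \<in> Ori \<or> (v, u) \<in> Ori"
  shows "three_colorable V E"
  unfolding three_colorable_def
proof (intro exI[of _ f] conjI ballI impI)
  fix u v assume "E u v"
  then consider "(u, v) \<in> Ori" | "(v, u) \<in> Ori" using total by blast
  then show "f u \<noteq> f v" using sep by cases (simp, metis)
qed (rule range)

theorem mainTheorem8:
  fixes V :: "'a set" and E :: "'a \<Rightarrow> 'a \<Rightarrow> bool"
    and Ori :: "('a \<times> 'a) set"
    and Lint :: "'a \<times> 'a \<Rightarrow> nat \<Rightarrow> nat \<Rightarrow> nat set"
    and \<alpha> :: "'a vtx \<Rightarrow> nat"
  assumes finV: "finite V"
    and E_in: "\<And>u v. E u v \<Longrightarrow> u \<in> V \<and> v \<in> V"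
    and E_sym: "\<And>u v. E u v \<Longrightarrow> E v u"
    and E_irr: "\<And>u. \<not> E u u"
    and O_sub: "\<And>u v. (u, v) \<in> Ori \<Longrightarrow> E u v"
    and O_tot: "\<And>u v. E u v \<Longrightarrow> (u, v) \<in> Ori \<or> (v, u) \<in> Ori"
    and O_asym: "\<And>u v. (u, v) \<in> Ori \<Longrightarrow> (v, u) \<notin> Ori"
    and forb: "\<And>e k. e \<in> Ori \<Longrightarrow> k < 8 \<Longrightarrow>
       forbidding 6 (\<lambda>i. Glist Lint (pvert e k i)) (forb_a k) (forb_b k)"
    and alpha_col: "Lcoloring (Gvert V Ori) (Gadj Ori) (Glist Lint) \<alpha>"
    and alpha_orig: "\<And>u. u \<in> V \<Longrightarrow> \<alpha> (Orig u) = 1"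
    and alpha_xyz: "\<And>e. e \<in> Ori \<Longrightarrow> \<alpha> (Xv e) = 4 \<and> \<alpha> (Yv e) = 4 \<and> \<alpha> (Zv e) = 4"
    and alpha_abcd: "\<alpha> Av = 1" "\<alpha> Bv = 2" "\<alpha> Cv = 3" "\<alpha> Dv = 4"
    and reconf: "\<exists>cs. Lrecoloring_seq (Gvert V Ori) (Gadj Ori) (Glist Lint)
                    \<alpha> (\<alpha>(Av := 2, Bv := 1)) cs"
  shows "three_colorable V E"
proof -
  have OV: "Ori \<subseteq> V \<times> V" using O_sub E_in by auto
  obtain cs where R: "Lrecoloring_seq (Gvert V Ori) (Gadj Ori) (Glist Lint) \<alpha> (\<alpha>(Av := 2, Bv := 1)) cs"
    using reconf by blast
  obtain c where c_in: "c \<in> set cs" and c4: "c Cv = 4"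
    using recoloring_passes_c4[OF R finV OV alpha_abcd(1)] .
  have col: "Lcoloring (Gvert V Ori) (Gadj Ori) (Glist Lint) c"
    using Lrecoloring_seq_coloring[OF R c_in] .
  show ?thesis
  proof (rule three_colorable_from_orientation[where f = "\<lambda>v. c (Orig v)"])
    fix v assume "v \<in> V"
    then show "c (Orig v) \<in> {1, 2, 3}"
      using Lcoloring_in_list[OF col, of "Orig v"] by (simp add: Gvert_def Glist_def)
  next
    fix u v assume "(u, v) \<in> Ori"
    then show "c (Orig u) \<noteq> c (Orig v)"
      using coloring_with_c4_separates_edge[OF col OV c4 forb] by blast
  qed (rule O_tot)
qed

end
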